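(* Let $\Gamma_\mu:\mathbb{R}^N_+\to\mathbb{R}^N_+$ be monotone and satisfy the small gain condition $\Gamma_\mu(s)\not\geq s$ for all $s\in\mathbb{R}^N_+\setminus\{0\}$. Let $\kappa_0>0$, $\kappa_\Gamma>\kappa_h>0$ and let $\phi:\mathbb{R}^N_+\to\mathbb{R}^N$ be defined by $$\phi(v)=\Gamma_\mu(v)\Big(1+\min\Big\{0,\frac{\kappa_\Gamma-2\|v\|}{\|v\|+\kappa_0}\Big\}\Big)+\max\{0,\kappa_h-2\|v\|\}\,e .$$ If $s\in\mathbb{R}^N_+$ satisfies $s=\phi(s)$, then $\Gamma_\mu(s)\ll s$ (i.e. $s\in\Omega(\Gamma_\mu)$) and $\|s\|<\kappa_h/2$.
   Context: On $\mathbb{R}^N$: $v\geq w$ iff $v_i\ge w_i$ for all $i$; $v>w$ iff $v\ge w$ and $v\ne w$; $v\gg w$ iff $v_i>w_i$ for all $i$; $\not\geq$ is the negation of $\geq$. $\|\cdot\|$ is the Euclidean norm and $e=(1,\dots,1)^\top\in\mathbb{R}^N$. A map $T:\mathbb{R}^N_+\to\mathbb{R}^N_+$ is monotone if $v\le w$ implies $T(v)\le T(w)$. The decay set is $\Omega(\Gamma_\mu)=\{s\in\mathbb{R}^N_+:\Gamma_\mu(s)\ll s\}$. *)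

theory Defs
  imports "HOL-Analysis.Analysis"
begin

text \<open>Componentwise orders on R^N, with index type 'n (N = CARD('n)).\<close>
definition vge :: "real^'n \<Rightarrow> real^'n \<Rightarrow> bool" where
  "vge v w \<longleftrightarrow> (\<forall>i. v $ i \<ge> w $ i)"

definition vgg :: "real^'n \<Rightarrow> real^'n \<Rightarrow> bool" where
  "vgg v w \<longleftrightarrow> (\<forall>i. v $ i > w $ i)"

definition nonneg_orthant :: "(real^'n) set" where
  "nonneg_orthant = {v. vge v 0}"

definition monotone_pos :: "(real^'n \<Rightarrow> real^'n) \<Rightarrow> bool" where
  "monotone_pos T \<longleftrightarrow> (\<forall>v\<in>nonneg_orthant. \<forall>w\<in>nonneg_orthant. vge w v \<longrightarrow> vge (T w) (T v))"

definition decay_set :: "(real^'n \<Rightarrow> real^'n) \<Rightarrow> (real^'n) set" where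
  "decay_set G = {s\<in>nonneg_orthant. vgg s (G s)}"

definition phi :: "(real^'n \<Rightarrow> real^'n) \<Rightarrow> real \<Rightarrow> real \<Rightarrow> real \<Rightarrow> real^'n \<Rightarrow> real^'n" where
  "phi G k0 kG kh v =
     (1 + min 0 ((kG - 2 * norm v) / (norm v + k0))) *\<^sub>R G v
     + max 0 (kh - 2 * norm v) *\<^sub>R (\<chi> i. 1)"

end

theory Submission
  imports Defs
begin

(* Write phi v = c(v) * G v + h(v) * e with the damping factor
   c(v) = 1 + min 0 ((kG - 2|v|) / (|v| + k0)) <= 1 and the offset
   h(v) = max 0 (kh - 2|v|) >= 0.  Let s = phi s be a nonnegative fixed point.
   (1) If |s| >= kh/2 then h(s) = 0, so s = c(s) * G s with c(s) <= 1: either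
       c(s) < 0, forcing s = 0 (impossible since |s| >= kh/2 > 0), or
       0 <= c(s) <= 1, giving G s >= s with s <> 0, contradicting the small
       gain condition.  Hence |s| < kh/2.
   (2) Then kG - 2|s| > 0, so c(s) = 1, and h(s) > 0; thus s = G s + h(s) e
       dominates G s strictly in every component, i.e. s lies in the decay set. *)

definition damping :: "real \<Rightarrow> real \<Rightarrow> real \<Rightarrow> real" where
  "damping k0 kG r = 1 + min 0 ((kG - 2 * r) / (r + k0))"

definition offset :: "real \<Rightarrow> real \<Rightarrow> real" where
  "offset kh r = max 0 (kh - 2 * r)"

lemma phi_component:
  "phi G k0 kG kh v $ i = damping k0 kG (norm v) * G v $ i + offset kh (norm v)"
  unfolding phi_def damping_def offset_def by simp

lemma scaled_vector_zero_or_dominated: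
  fixes v w :: "real^'n" and c :: real
  assumes v: "v \<in> nonneg_orthant" and w: "w \<in> nonneg_orthant"
    and c: "c \<le> 1" and scaled: "\<And>i. v $ i = c * w $ i"
  shows "v = 0 \<or> vge w v"
proof (cases "c \<ge> 0")
  case True
  have "v $ i \<le> w $ i" for i
  proof -
    have "w $ i \<ge> 0" using w unfolding nonneg_orthant_def vge_def by simp
    hence "c * w $ i \<le> 1 * w $ i" by (rule mult_right_mono[OF c])
    thus ?thesis using scaled[of i] by simp
  qed
  thus ?thesis unfolding vge_def by simp
next
  case False
  have "v $ i = 0" for i
  proof -
    have "w $ i \<ge> 0" "v $ i \<ge> 0"
      using v w unfolding nonneg_orthant_def vge_def by simp_all
    moreover have "c * w $ i \<le> 0" using False \<open>w $ i \<ge> 0\<close> by (simp add: mult_nonpos_nonneg)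
    ultimately show ?thesis using scaled[of i] by linarith
  qed
  thus ?thesis by (simp add: vec_eq_iff)
qed

text \<open>A fixed point of phi has norm below kh/2: otherwise the offset vanishes and
  the fixed point equation contradicts the small gain condition.\<close>

lemma phi_fixed_point_norm_bound:
  fixes G :: "real^'n \<Rightarrow> real^'n" and s :: "real^'n"
  assumes maps: "\<forall>v\<in>nonneg_orthant. G v \<in> nonneg_orthant"
    and sgc: "\<forall>v\<in>nonneg_orthant. v \<noteq> 0 \<longrightarrow> \<not> vge (G v) v"
    and kh: "kh > 0"
    and s: "s \<in> nonneg_orthant" and fixp: "s = phi G k0 kG kh s"
  shows "norm s < kh / 2"
proof (rule ccontr)
  assume "\<not> norm s < kh / 2"
  hence large: "norm s \<ge> kh / 2" by simp
  hence "s \<noteq> 0" using kh by auto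
  moreover have "s = 0 \<or> vge (G s) s"
  proof (rule scaled_vector_zero_or_dominated[OF s])
    show "G s \<in> nonneg_orthant" using maps s by blast
    show "damping k0 kG (norm s) \<le> 1" unfolding damping_def by simp
    show "s $ i = damping k0 kG (norm s) * G s $ i" for i
      using arg_cong[OF fixp, of "\<lambda>v. v $ i"] large
      by (simp add: phi_component offset_def)
  qed
  ultimately show False using sgc s by blast
qed

lemma damping_eq_one:
  assumes "k0 > 0" and "0 \<le> r" and "2 * r < kG"
  shows "damping k0 kG r = 1"
proof -
  have "(kG - 2 * r) / (r + k0) > 0" using assms by (intro divide_pos_pos) auto
  thus ?thesis unfolding damping_def by simp
qed

theorem mainTheorem2:
  fixes G :: "real^'n \<Rightarrow> real^'n" and k0 kG kh :: real and s :: "real^'n"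
  assumes maps: "\<forall>v\<in>nonneg_orthant. G v \<in> nonneg_orthant"
    and mono: "monotone_pos G"
    and sgc: "\<forall>v\<in>nonneg_orthant. v \<noteq> 0 \<longrightarrow> \<not> vge (G v) v"
    and k0: "k0 > 0" and kh: "kh > 0" and kGh: "kG > kh"
    and s: "s \<in> nonneg_orthant" and fixp: "s = phi G k0 kG kh s"
  shows "s \<in> decay_set G \<and> norm s < kh / 2"
proof -
  have small: "norm s < kh / 2"
    using phi_fixed_point_norm_bound[OF maps sgc kh s fixp] .
  have undamped: "damping k0 kG (norm s) = 1"
    using small kGh k0 by (intro damping_eq_one) auto
  have shifted: "offset kh (norm s) > 0"
    using small unfolding offset_def by simp
  have "s $ i = G s $ i + offset kh (norm s)" for i
    using arg_cong[OF fixp, of "\<lambda>v. v $ i"] undamped by (simp add: phi_component)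
  hence "vgg s (G s)" using shifted unfolding vgg_def by simp
  thus ?thesis using small s unfolding decay_set_def by simp
qed

end
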